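(* If a domino tiling system $\mathcal{D}$ is solvable, then there exists a $\mathcal{D}$-snake.
   Context: A domino tiling system is $\mathcal{D}=(\mathrm{Col},\mathrm{T},\mathrm{white})$ with $\mathrm{Col}$ a finite set of colours, $\mathrm{T}\subseteq\mathrm{Col}^4$ a set of tiles $(c_l,c_d,c_r,c_u)$ and $\mathrm{white}\in\mathrm{Col}$; throughout, $\mathrm{T}$ contains no tile with more than two white sides. A tile is left-/down-/right-/up-border if $c_l$/$c_d$/$c_r$/$c_u$ equals white. Tiles $t=(c_l,c_d,c_r,c_u)$, $t'=(c'_l,c'_d,c'_r,c'_u)$ are H-compatible if $c_r=c'_l$ and V-compatible if $c_u=c'_d$. $\mathcal{D}$ covers $\mathbb{Z}_n\times\mathbb{Z}_m$ ($n,m$ positive) if there is $\xi:\mathbb{Z}_n\times\mathbb{Z}_m\to\mathrm{T}$ such that for all $(x,y)$ with $\xi(x,y)=(c_l,c_d,c_r,c_u)$: $x=0$ iff $c_l$ is white, $x=n-1$ iff $c_r$ is white, $y=0$ iff $c_d$ is white, $y=m-1$ iff $c_u$ is white; $\xi(x,y),\xi(x+1,y)$ are H-compatible whenever $x+1<n$; $\xi(x,y),\xi(x,y+1)$ are V-compatible whenever $y+1<m$. $\mathcal{D}$ is solvable if it covers some $\mathbb{Z}_n\times\mathbb{Z}_m$. Use a role name $r$, individual names $\mathsf{ld},\mathsf{rd},\mathsf{lu},\mathsf{ru}$ (the named ones) and concept names $C_t$ ($t\in\mathrm{T}$); an element carries $t$ if it lies in $C_t^{\mathcal{I}}$. An interpretation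 $\mathcal{I}$ is a $\mathcal{D}$-snake if: (SPath) there is an $r^+$-path starting at $\mathsf{ld}^{\mathcal{I}}$, later passing $\mathsf{rd}^{\mathcal{I}}$, later $\mathsf{lu}^{\mathcal{I}}$ and ending at $\mathsf{ru}^{\mathcal{I}}$ (at positions $1<i<j<$ last); (SNoLoop) no named element $r^+$-reaches itself; (SUniqTil) every element $r^*$-reachable from $\mathsf{ld}^{\mathcal{I}}$ carries exactly one tile; (SSpecTil) the named elements are exactly the elements $r^*$-reachable from $\mathsf{ld}^{\mathcal{I}}$ carrying a tile with two white sides, and $\mathsf{ld}^{\mathcal{I}}$ carries a left- and down-border tile, $\mathsf{rd}^{\mathcal{I}}$ a right- and down-border tile, $\mathsf{lu}^{\mathcal{I}}$ a left- and up-border tile, $\mathsf{ru}^{\mathcal{I}}$ a right- and up-border tile; (SHori) for every element $d\neq\mathsf{ru}^{\mathcal{I}}$ that is $r^*$-reachable from $\mathsf{ld}^{\mathcal{I}}$ and carries $t=(c_l,c_d,c_r,c_u)$ there is a tile $t'=(c'_l,c'_d,c'_r,c'_u)$ carried by all $r$-successors of $d$ such that (i) $t,t'$ are H-compatible, (ii) if $c_d$ is white then ($c_r$ is not white iff $c'_d$ is white), (iii) if $c_u$ is white then $c'_u$ is white; (SLen) there is a unique positive integer $N$ such that all $r^+$-paths from $\mathsf{ld}^{\mathcal{I}}$ to $\mathsf{rd}^{\mathcal{I}}$ have length $N-1$, and $\mathsf{rd}^{\mathcal{I}}$ is the only element $r^{N-1}$-reachable from $\mathsf{ld}^{\mathcal{I}}$;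 (SVerti) for every element $d$ $r^*$-reachable from $\mathsf{ld}^{\mathcal{I}}$ carrying a tile $t$ that is not up-border, there is a tile $t'$ carried by all elements $r^N$-reachable from $d$ (with $N$ from (SLen)) such that $t,t'$ are V-compatible and $t$ is left-border (resp. right-border) iff $t'$ is. Path length is the number of edges. *)

theory Defs
  imports Main
begin

type_synonym 'c tile = "'c \<times> 'c \<times> 'c \<times> 'c"

definition cl :: "'c tile \<Rightarrow> 'c" where "cl t = fst t"
definition cd :: "'c tile \<Rightarrow> 'c" where "cd t = fst (snd t)"
definition cr :: "'c tile \<Rightarrow> 'c" where "cr t = fst (snd (snd t))"
definition cu :: "'c tile \<Rightarrow> 'c" where "cu t = snd (snd (snd t))"

definition num_white :: "'c \<Rightarrow> 'c tile \<Rightarrow> nat" where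
  "num_white w t = (if cl t = w then 1 else 0) + (if cd t = w then 1 else 0)
                 + (if cr t = w then 1 else 0) + (if cu t = w then 1 else 0)"

definition domino_system :: "'c set \<Rightarrow> 'c tile set \<Rightarrow> 'c \<Rightarrow> bool" where
  "domino_system Col T w \<longleftrightarrow> finite Col \<and> w \<in> Col
     \<and> (\<forall>t\<in>T. cl t \<in> Col \<and> cd t \<in> Col \<and> cr t \<in> Col \<and> cu t \<in> Col)
     \<and> (\<forall>t\<in>T. num_white w t \<le> 2)"

definition H_compat :: "'c tile \<Rightarrow> 'c tile \<Rightarrow> bool" where
  "H_compat t t' \<longleftrightarrow> cr t = cl t'"
definition V_compat :: "'c tile \<Rightarrow> 'c tile \<Rightarrow> bool" where
  "V_compat t t' \<longleftrightarrow> cu t = cd t'"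

definition covers :: "'c tile set \<Rightarrow> 'c \<Rightarrow> nat \<Rightarrow> nat \<Rightarrow> bool" where
  "covers T w n m \<longleftrightarrow> (\<exists>\<xi> :: nat \<times> nat \<Rightarrow> 'c tile.
      (\<forall>x<n. \<forall>y<m. \<xi> (x,y) \<in> T
         \<and> (x = 0 \<longleftrightarrow> cl (\<xi> (x,y)) = w) \<and> (x = n - 1 \<longleftrightarrow> cr (\<xi> (x,y)) = w)
         \<and> (y = 0 \<longleftrightarrow> cd (\<xi> (x,y)) = w) \<and> (y = m - 1 \<longleftrightarrow> cu (\<xi> (x,y)) = w))
    \<and> (\<forall>x y. x + 1 < n \<and> y < m \<longrightarrow> H_compat (\<xi> (x,y)) (\<xi> (x+1,y)))
    \<and> (\<forall>x y. x < n \<and> y + 1 < m \<longrightarrow> V_compat (\<xi> (x,y)) (\<xi> (x,y+1))))"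

definition solvable :: "'c tile set \<Rightarrow> 'c \<Rightarrow> bool" where
  "solvable T w \<longleftrightarrow> (\<exists>n m. 0 < n \<and> 0 < m \<and> covers T w n m)"

text \<open>An interpretation: domain nat, role r, named individuals ld rd lu ru,
  concept names C t for t in T.\<close>

definition carries :: "'c tile set \<Rightarrow> ('c tile \<Rightarrow> 'd set) \<Rightarrow> 'd \<Rightarrow> 'c tile \<Rightarrow> bool" where
  "carries T C d t \<longleftrightarrow> t \<in> T \<and> d \<in> C t"

definition SLen_prop :: "('d \<times> 'd) set \<Rightarrow> 'd \<Rightarrow> 'd \<Rightarrow> nat \<Rightarrow> bool" where
  "SLen_prop r ld rd N \<longleftrightarrow> 0 < N
     \<and> (\<forall>k. 0 < k \<and> (ld, rd) \<in> r ^^ k \<longrightarrow> k = N - 1)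
     \<and> {d. (ld, d) \<in> r ^^ (N - 1)} = {rd}"

definition SVerti_prop :: "'c tile set \<Rightarrow> 'c \<Rightarrow> ('d \<times> 'd) set \<Rightarrow> 'd \<Rightarrow>
    ('c tile \<Rightarrow> 'd set) \<Rightarrow> nat \<Rightarrow> bool" where
  "SVerti_prop T w r ld C N \<longleftrightarrow> (\<forall>d t. (ld, d) \<in> r\<^sup>* \<and> carries T C d t \<and> cu t \<noteq> w \<longrightarrow>
      (\<exists>t'\<in>T. (\<forall>e. (d, e) \<in> r ^^ N \<longrightarrow> e \<in> C t') \<and> V_compat t t'
         \<and> (cl t = w \<longleftrightarrow> cl t' = w) \<and> (cr t = w \<longleftrightarrow> cr t' = w)))"

definition is_snake :: "'c tile set \<Rightarrow> 'c \<Rightarrow> ('d \<times> 'd) set \<Rightarrow> 'd \<Rightarrow> 'd \<Rightarrow> 'd \<Rightarrow> 'd \<Rightarrow>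
    ('c tile \<Rightarrow> 'd set) \<Rightarrow> bool" where
  "is_snake T w r ld rd lu ru C \<longleftrightarrow>
    \<comment> \<open>SPath\<close>
    (\<exists>p :: nat \<Rightarrow> 'd. \<exists>L i j. 1 \<le> i \<and> i < j \<and> j < L \<and> p 0 = ld \<and> p i = rd \<and> p j = lu \<and> p L = ru
        \<and> (\<forall>k<L. (p k, p (Suc k)) \<in> r))
    \<comment> \<open>SNoLoop\<close>
  \<and> (\<forall>a\<in>{ld, rd, lu, ru}. (a, a) \<notin> r\<^sup>+)
    \<comment> \<open>SUniqTil\<close>
  \<and> (\<forall>d. (ld, d) \<in> r\<^sup>* \<longrightarrow> (\<exists>!t. carries T C d t))
    \<comment> \<open>SSpecTil\<close>
  \<and> {ld, rd, lu, ru} = {d. (ld, d) \<in> r\<^sup>* \<and> (\<exists>t. carries T C d t \<and> num_white w t = 2)}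
  \<and> (\<exists>t. carries T C ld t \<and> cl t = w \<and> cd t = w)
  \<and> (\<exists>t. carries T C rd t \<and> cr t = w \<and> cd t = w)
  \<and> (\<exists>t. carries T C lu t \<and> cl t = w \<and> cu t = w)
  \<and> (\<exists>t. carries T C ru t \<and> cr t = w \<and> cu t = w)
    \<comment> \<open>SHori\<close>
  \<and> (\<forall>d t. (ld, d) \<in> r\<^sup>* \<and> d \<noteq> ru \<and> carries T C d t \<longrightarrow>
      (\<exists>t'\<in>T. (\<forall>e. (d, e) \<in> r \<longrightarrow> e \<in> C t') \<and> H_compat t t'
         \<and> (cd t = w \<longrightarrow> (cr t \<noteq> w \<longleftrightarrow> cd t' = w))
         \<and> (cu t = w \<longrightarrow> cu t' = w)))
    \<comment> \<open>SLen\<close>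
  \<and> (\<exists>!N. SLen_prop r ld rd N)
    \<comment> \<open>SVerti (with the N of SLen)\<close>
  \<and> (\<forall>N. SLen_prop r ld rd N \<longrightarrow> SVerti_prop T w r ld C N)"

end

theory Submission
  imports Defs
begin

text \<open>Enumerate the cells of a covering of the n \<times> m grid row by row, cell d being (d mod n, d div n),
  and let r link d to d + 1. One step right is one r-step (at the end of a row it wraps around to
  the start of the next row) and one step up is n r-steps, so the horizontal and vertical
  compatibilities of the covering give SHori and SVerti with N = n. Since no tile has three white
  sides, both n and m are at least 2, and the tiles with two white sides sit exactly at the four
  corners 0, n - 1, (m - 1) n and n m - 1, which become ld, rd, lu and ru.\<close>

definition successor_chain :: "nat \<Rightarrow> (nat \<times> nat) set" where
  "successor_chain M = {(a, b). b = Suc a \<and> b < M}"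

lemma successor_chain_iff: "(a, b) \<in> successor_chain M \<longleftrightarrow> b = Suc a \<and> b < M"
  by (simp add: successor_chain_def)

lemma relpow_successor_chain_iff:
  "(a, b) \<in> successor_chain M ^^ k \<longleftrightarrow> b = a + k \<and> (k = 0 \<or> b < M)"
proof (induction k arbitrary: b)
  case 0
  then show ?case by auto
next
  case (Suc k)
  show ?case by (auto simp: Suc.IH successor_chain_iff relcomp_unfold)
qed

lemma rtrancl_successor_chain_iff:
  "(a, b) \<in> (successor_chain M)\<^sup>* \<longleftrightarrow> a = b \<or> a < b \<and> b < M"
proof -
  have "(a, b) \<in> (successor_chain M)\<^sup>* \<longleftrightarrow> (\<exists>k. b = a + k \<and> (k = 0 \<or> b < M))"
    by (simp add: rtrancl_power relpow_successor_chain_iff)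
  also have "\<dots> \<longleftrightarrow> a = b \<or> a < b \<and> b < M"
    by (auto intro: exI[of _ "b - a"])
  finally show ?thesis .
qed

lemma trancl_successor_chain_less:
  assumes "(a, b) \<in> (successor_chain M)\<^sup>+"
  shows "a < b"
proof -
  from assms obtain k where "0 < k" "(a, b) \<in> successor_chain M ^^ k"
    by (auto simp: trancl_power)
  then show ?thesis by (simp add: relpow_successor_chain_iff)
qed

lemma SLen_prop_successor_chain_iff:
  assumes "k < M"
  shows "SLen_prop (successor_chain M) 0 k N \<longleftrightarrow> N = Suc k"
proof
  assume "SLen_prop (successor_chain M) 0 k N"
  then have "0 < N" "(0, k) \<in> successor_chain M ^^ (N - 1)"
    unfolding SLen_prop_def by auto
  then show "N = Suc k" by (simp add: relpow_successor_chain_iff)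
next
  assume "N = Suc k"
  with assms show "SLen_prop (successor_chain M) 0 k N"
    unfolding SLen_prop_def by (auto simp: relpow_successor_chain_iff)
qed

locale grid_covering =
  fixes T :: "'c tile set" and w :: 'c and n m :: nat and \<xi> :: "nat \<times> nat \<Rightarrow> 'c tile"
  assumes at_most_two_white: "t \<in> T \<Longrightarrow> num_white w t \<le> 2"
    and n_pos: "0 < n" and m_pos: "0 < m"
    and tile_in_T: "x < n \<Longrightarrow> y < m \<Longrightarrow> \<xi> (x, y) \<in> T"
    and left_white_iff: "x < n \<Longrightarrow> y < m \<Longrightarrow> cl (\<xi> (x, y)) = w \<longleftrightarrow> x = 0"
    and right_white_iff: "x < n \<Longrightarrow> y < m \<Longrightarrow> cr (\<xi> (x, y)) = w \<longleftrightarrow> x = n - 1"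
    and down_white_iff: "x < n \<Longrightarrow> y < m \<Longrightarrow> cd (\<xi> (x, y)) = w \<longleftrightarrow> y = 0"
    and up_white_iff: "x < n \<Longrightarrow> y < m \<Longrightarrow> cu (\<xi> (x, y)) = w \<longleftrightarrow> y = m - 1"
    and H_compat_right: "x + 1 < n \<Longrightarrow> y < m \<Longrightarrow> H_compat (\<xi> (x, y)) (\<xi> (x + 1, y))"
    and V_compat_up: "x < n \<Longrightarrow> y + 1 < m \<Longrightarrow> V_compat (\<xi> (x, y)) (\<xi> (x, y + 1))"

lemma covers_imp_grid_covering:
  assumes "domino_system Col T w" "0 < n" "0 < m" "covers T w n m"
  obtains \<xi> where "grid_covering T w n m \<xi>"
proof -
  from assms(4) obtain \<xi> where
    "\<forall>x<n. \<forall>y<m. \<xi> (x, y) \<in> T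
       \<and> (x = 0 \<longleftrightarrow> cl (\<xi> (x, y)) = w) \<and> (x = n - 1 \<longleftrightarrow> cr (\<xi> (x, y)) = w)
       \<and> (y = 0 \<longleftrightarrow> cd (\<xi> (x, y)) = w) \<and> (y = m - 1 \<longleftrightarrow> cu (\<xi> (x, y)) = w)"
    "\<forall>x y. x + 1 < n \<and> y < m \<longrightarrow> H_compat (\<xi> (x, y)) (\<xi> (x + 1, y))"
    "\<forall>x y. x < n \<and> y + 1 < m \<longrightarrow> V_compat (\<xi> (x, y)) (\<xi> (x, y + 1))"
    unfolding covers_def by blast
  with assms(1-3) have "grid_covering T w n m \<xi>"
    unfolding grid_covering_def domino_system_def by auto
  then show thesis by (rule that)
qed

context grid_covering
begin

lemma n_ge_2: "2 \<le> n"
proof (rule ccontr)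
  assume "\<not> 2 \<le> n"
  with n_pos have "n = 1" by simp
  with m_pos have "cl (\<xi> (0, 0)) = w" "cr (\<xi> (0, 0)) = w" "cd (\<xi> (0, 0)) = w"
    by (simp_all add: left_white_iff right_white_iff down_white_iff)
  with at_most_two_white[OF tile_in_T] n_pos m_pos show False
    by (fastforce simp: num_white_def)
qed

lemma m_ge_2: "2 \<le> m"
proof (rule ccontr)
  assume "\<not> 2 \<le> m"
  with m_pos have "m = 1" by simp
  with n_pos have "cl (\<xi> (0, 0)) = w" "cd (\<xi> (0, 0)) = w" "cu (\<xi> (0, 0)) = w"
    by (simp_all add: left_white_iff down_white_iff up_white_iff)
  with at_most_two_white[OF tile_in_T] n_pos m_pos show False
    by (fastforce simp: num_white_def)
qed

definition cell :: "nat \<Rightarrow> 'c tile" where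
  "cell d = \<xi> (d mod n, d div n)"

definition snake_concept :: "'c tile \<Rightarrow> nat set" where
  "snake_concept t = {d. d < n * m \<and> cell d = t}"

lemma div_less_m: "d < n * m \<Longrightarrow> d div n < m"
  by (simp add: less_mult_imp_div_less mult.commute)

lemma cell_in_T: "d < n * m \<Longrightarrow> cell d \<in> T"
  using n_pos div_less_m by (simp add: cell_def tile_in_T)

lemma
  assumes "d < n * m"
  shows cell_left_white_iff: "cl (cell d) = w \<longleftrightarrow> d mod n = 0"
    and cell_right_white_iff: "cr (cell d) = w \<longleftrightarrow> d mod n = n - 1"
    and cell_down_white_iff: "cd (cell d) = w \<longleftrightarrow> d div n = 0"
    and cell_up_white_iff: "cu (cell d) = w \<longleftrightarrow> d div n = m - 1"
  using assms n_pos div_less_m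
  by (simp_all add: cell_def left_white_iff right_white_iff down_white_iff up_white_iff)

lemma carries_snake_concept_iff: "carries T snake_concept d t \<longleftrightarrow> d < n * m \<and> t = cell d"
  using cell_in_T by (auto simp: carries_def snake_concept_def)

lemma reachable_from_0_iff: "(0, d) \<in> (successor_chain (n * m))\<^sup>* \<longleftrightarrow> d < n * m"
  using n_pos m_pos by (auto simp: rtrancl_successor_chain_iff)

lemma last_cell_eq: "n * m - 1 = (m - 1) * n + (n - 1)"
  using n_pos m_pos by (cases m) (simp_all add: algebra_simps)

lemma corners_less: "0 < n - 1" "n - 1 < (m - 1) * n" "(m - 1) * n < n * m - 1"
proof -
  show "0 < n - 1" using n_ge_2 by simp
  have "1 * n \<le> (m - 1) * n" using m_ge_2 by (intro mult_le_mono1) simp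
  then show "n - 1 < (m - 1) * n" using n_pos by linarith
  show "(m - 1) * n < n * m - 1" using last_cell_eq n_ge_2 by simp
qed

lemma corner_coordinates:
  "(n - 1) mod n = n - 1" "(n - 1) div n = 0"
  "((m - 1) * n) mod n = 0" "((m - 1) * n) div n = m - 1"
  "(n * m - 1) mod n = n - 1" "(n * m - 1) div n = m - 1"
proof -
  have digits: "(k * n + j) mod n = j" "(k * n + j) div n = k" if "j < n" for k j
    using that by simp_all
  have "n - 1 < n" using n_pos by simp
  then show "(n * m - 1) mod n = n - 1" "(n * m - 1) div n = m - 1"
    unfolding last_cell_eq by (rule digits)+
  show "(n - 1) mod n = n - 1" "(n - 1) div n = 0"
    "((m - 1) * n) mod n = 0" "((m - 1) * n) div n = m - 1"
    using n_pos by simp_all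
qed

lemma corner_mod_div_iff:
  assumes "d < n * m"
  shows "(d mod n = 0 \<or> d mod n = n - 1) \<and> (d div n = 0 \<or> d div n = m - 1)
    \<longleftrightarrow> d \<in> {0, n - 1, (m - 1) * n, n * m - 1}"
proof
  assume "d \<in> {0, n - 1, (m - 1) * n, n * m - 1}"
  then show "(d mod n = 0 \<or> d mod n = n - 1) \<and> (d div n = 0 \<or> d div n = m - 1)"
    using corner_coordinates by auto
next
  have corner: "q * n + r \<in> {0, n - 1, (m - 1) * n, n * m - 1}"
    if "(r = 0 \<or> r = n - 1) \<and> (q = 0 \<or> q = m - 1)" for q r
    using that last_cell_eq by auto
  assume "(d mod n = 0 \<or> d mod n = n - 1) \<and> (d div n = 0 \<or> d div n = m - 1)"
  then show "d \<in> {0, n - 1, (m - 1) * n, n * m - 1}"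
    using corner[where q = "d div n" and r = "d mod n"] by simp
qed

lemma num_white_cell_eq_2_iff:
  assumes "d < n * m"
  shows "num_white w (cell d) = 2 \<longleftrightarrow> d \<in> {0, n - 1, (m - 1) * n, n * m - 1}"
  using n_ge_2 m_ge_2 corner_mod_div_iff[OF assms]
  by (auto simp: num_white_def cell_left_white_iff[OF assms] cell_right_white_iff[OF assms]
      cell_down_white_iff[OF assms] cell_up_white_iff[OF assms])

text \<open>At the end of a row the step to the next cell wraps around to the start of the row above;
  H-compatibility then holds because both the right side of the old tile and the left side of the
  new one are white.\<close>
lemma cell_step_right:
  assumes "Suc d < n * m"
  shows "H_compat (cell d) (cell (Suc d))"
    and "cd (cell d) = w \<Longrightarrow> cr (cell d) \<noteq> w \<longleftrightarrow> cd (cell (Suc d)) = w"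
    and "cu (cell d) = w \<Longrightarrow> cu (cell (Suc d)) = w"
proof -
  have d: "d < n * m" using assms by simp
  note white_iff = cell_left_white_iff cell_right_white_iff cell_down_white_iff cell_up_white_iff
  consider (row_end) "Suc (d mod n) = n" | (inner) "Suc (d mod n) < n"
    using n_pos mod_less_divisor[of n d] by linarith
  then have "H_compat (cell d) (cell (Suc d))
      \<and> (cd (cell d) = w \<longrightarrow> cr (cell d) \<noteq> w \<longleftrightarrow> cd (cell (Suc d)) = w)
      \<and> (cu (cell d) = w \<longrightarrow> cu (cell (Suc d)) = w)"
  proof cases
    case row_end
    then have "Suc d mod n = 0" "Suc d div n = Suc (d div n)"
      by (auto simp: mod_Suc div_Suc)
    moreover have "Suc (d div n) < m" using div_less_m[OF assms] calculation by simp
    ultimately show ?thesis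
      using row_end m_ge_2 white_iff[OF d] white_iff[OF assms] by (auto simp: H_compat_def)
  next
    case inner
    then have eq: "Suc d mod n = Suc (d mod n)" "Suc d div n = d div n"
      by (auto simp: mod_Suc div_Suc)
    then have "H_compat (cell d) (cell (Suc d))"
      using inner div_less_m[OF d] H_compat_right[of "d mod n" "d div n"] by (simp add: cell_def)
    then show ?thesis
      using eq inner white_iff[OF d] white_iff[OF assms] by auto
  qed
  then show "H_compat (cell d) (cell (Suc d))"
    and "cd (cell d) = w \<Longrightarrow> cr (cell d) \<noteq> w \<longleftrightarrow> cd (cell (Suc d)) = w"
    and "cu (cell d) = w \<Longrightarrow> cu (cell (Suc d)) = w"
    by blast+
qed

lemma cell_step_up:
  assumes "d < n * m" and "cu (cell d) \<noteq> w"
  shows "d + n < n * m"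
    and "V_compat (cell d) (cell (d + n))"
    and "cl (cell d) = w \<longleftrightarrow> cl (cell (d + n)) = w"
    and "cr (cell d) = w \<longleftrightarrow> cr (cell (d + n)) = w"
proof -
  have row: "d div n + 1 < m"
    using assms div_less_m[OF assms(1)] cell_up_white_iff[OF assms(1)] by linarith
  have mod: "(d + n) mod n = d mod n" and div: "(d + n) div n = d div n + 1"
    using n_pos by (simp_all add: div_add_self2)
  have "d + n = (d div n + 1) * n + d mod n" by simp
  also have "\<dots> < (d div n + 1) * n + n"
    by (rule add_strict_left_mono[OF mod_less_divisor[OF n_pos]])
  also have "\<dots> = (d div n + 2) * n" by simp
  also have "\<dots> \<le> m * n" using row by (intro mult_right_mono) simp_all
  finally show up: "d + n < n * m" by (simp add: mult.commute)
  show "V_compat (cell d) (cell (d + n))"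
    using V_compat_up[OF _ row] n_pos mod div by (simp add: cell_def)
  show "cl (cell d) = w \<longleftrightarrow> cl (cell (d + n)) = w"
    using mod by (simp add: cell_left_white_iff[OF assms(1)] cell_left_white_iff[OF up])
  show "cr (cell d) = w \<longleftrightarrow> cr (cell (d + n)) = w"
    using mod by (simp add: cell_right_white_iff[OF assms(1)] cell_right_white_iff[OF up])
qed

abbreviation snake_rel :: "(nat \<times> nat) set" where
  "snake_rel \<equiv> successor_chain (n * m)"

lemma snake_SLen_iff: "SLen_prop snake_rel 0 (n - 1) N \<longleftrightarrow> N = n"
  using corners_less n_pos by (simp add: SLen_prop_successor_chain_iff)

lemma snake_special_tiles:
  "{0, n - 1, (m - 1) * n, n * m - 1}
    = {d. (0, d) \<in> snake_rel\<^sup>* \<and> (\<exists>t. carries T snake_concept d t \<and> num_white w t = 2)}"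
  using corners_less num_white_cell_eq_2_iff
  by (auto simp: reachable_from_0_iff carries_snake_concept_iff)

lemma snake_horizontal:
  assumes "(0, d) \<in> snake_rel\<^sup>*" "d \<noteq> n * m - 1" "carries T snake_concept d t"
  shows "\<exists>t' \<in> T. (\<forall>e. (d, e) \<in> snake_rel \<longrightarrow> e \<in> snake_concept t') \<and> H_compat t t'
    \<and> (cd t = w \<longrightarrow> (cr t \<noteq> w \<longleftrightarrow> cd t' = w)) \<and> (cu t = w \<longrightarrow> cu t' = w)"
proof -
  from assms have next_cell: "Suc d < n * m" and t: "t = cell d"
    by (auto simp: reachable_from_0_iff carries_snake_concept_iff)
  show ?thesis
    using cell_in_T[OF next_cell] cell_step_right[OF next_cell]
    by (intro bexI[of _ "cell (Suc d)"]) (auto simp: t successor_chain_iff snake_concept_def)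
qed

lemma snake_vertical: "SVerti_prop T w snake_rel 0 snake_concept n"
  unfolding SVerti_prop_def
proof (intro allI impI)
  fix d t assume "(0, d) \<in> snake_rel\<^sup>* \<and> carries T snake_concept d t \<and> cu t \<noteq> w"
  then have d: "d < n * m" and t: "t = cell d" and up: "cu (cell d) \<noteq> w"
    by (auto simp: reachable_from_0_iff carries_snake_concept_iff)
  show "\<exists>t' \<in> T. (\<forall>e. (d, e) \<in> snake_rel ^^ n \<longrightarrow> e \<in> snake_concept t') \<and> V_compat t t'
      \<and> (cl t = w \<longleftrightarrow> cl t' = w) \<and> (cr t = w \<longleftrightarrow> cr t' = w)"
    using cell_step_up[OF d up] cell_in_T n_pos
    by (intro bexI[of _ "cell (d + n)"]) (auto simp: t relpow_successor_chain_iff snake_concept_def)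
qed

theorem is_snake_row_major:
  "is_snake T w snake_rel 0 (n - 1) ((m - 1) * n) (n * m - 1) snake_concept"
  unfolding is_snake_def
proof (intro conjI)
  show "\<exists>p L i j. 1 \<le> i \<and> i < j \<and> j < L \<and> p 0 = 0 \<and> p i = n - 1 \<and> p j = (m - 1) * n
      \<and> p L = n * m - 1 \<and> (\<forall>k<L. (p k, p (Suc k)) \<in> snake_rel)"
    using corners_less
    by (intro exI[of _ id] exI[of _ "n * m - 1"] exI[of _ "n - 1"] exI[of _ "(m - 1) * n"])
      (auto simp: successor_chain_iff)
  show "\<forall>a \<in> {0, n - 1, (m - 1) * n, n * m - 1}. (a, a) \<notin> snake_rel\<^sup>+"
    using trancl_successor_chain_less by blast
  show "\<forall>d. (0, d) \<in> snake_rel\<^sup>* \<longrightarrow> (\<exists>!t. carries T snake_concept d t)"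
    by (simp add: reachable_from_0_iff carries_snake_concept_iff)
  show "{0, n - 1, (m - 1) * n, n * m - 1}
      = {d. (0, d) \<in> snake_rel\<^sup>* \<and> (\<exists>t. carries T snake_concept d t \<and> num_white w t = 2)}"
    by (rule snake_special_tiles)
  show "\<exists>t. carries T snake_concept 0 t \<and> cl t = w \<and> cd t = w"
    using n_pos m_pos
    by (simp add: carries_snake_concept_iff cell_left_white_iff cell_down_white_iff)
  show "\<exists>t. carries T snake_concept (n - 1) t \<and> cr t = w \<and> cd t = w"
    using corners_less corner_coordinates
    by (simp add: carries_snake_concept_iff cell_right_white_iff cell_down_white_iff)
  show "\<exists>t. carries T snake_concept ((m - 1) * n) t \<and> cl t = w \<and> cu t = w"
    using corners_less corner_coordinates
    by (simp add: carries_snake_concept_iff cell_left_white_iff cell_up_white_iff)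
  show "\<exists>t. carries T snake_concept (n * m - 1) t \<and> cr t = w \<and> cu t = w"
    using n_pos m_pos corner_coordinates
    by (simp add: carries_snake_concept_iff cell_right_white_iff cell_up_white_iff)
  show "\<forall>d t. (0, d) \<in> snake_rel\<^sup>* \<and> d \<noteq> n * m - 1 \<and> carries T snake_concept d t \<longrightarrow>
      (\<exists>t' \<in> T. (\<forall>e. (d, e) \<in> snake_rel \<longrightarrow> e \<in> snake_concept t') \<and> H_compat t t'
        \<and> (cd t = w \<longrightarrow> (cr t \<noteq> w \<longleftrightarrow> cd t' = w)) \<and> (cu t = w \<longrightarrow> cu t' = w))"
    using snake_horizontal by blast
  show "\<exists>!N. SLen_prop snake_rel 0 (n - 1) N"
    using snake_SLen_iff by simp
  show "\<forall>N. SLen_prop snake_rel 0 (n - 1) N \<longrightarrow> SVerti_prop T w snake_rel 0 snake_concept N"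
    using snake_SLen_iff snake_vertical by simp
qed

end

theorem lemma4p3:
  fixes Col :: "'c set" and T :: "'c tile set" and white :: 'c
  assumes "domino_system Col T white"
    and "solvable T white"
  shows "\<exists>(r :: (nat \<times> nat) set) ld rd lu ru (C :: 'c tile \<Rightarrow> nat set).
           is_snake T white r ld rd lu ru C"
proof -
  from assms(2) obtain n m where "0 < n" "0 < m" "covers T white n m"
    unfolding solvable_def by blast
  with assms(1) obtain \<xi> where "grid_covering T white n m \<xi>"
    by (rule covers_imp_grid_covering)
  then have "is_snake T white (successor_chain (n * m)) 0 (n - 1) ((m - 1) * n) (n * m - 1)
      (grid_covering.snake_concept n m \<xi>)"
    by (rule grid_covering.is_snake_row_major)
  then show ?thesis by blast
qed

end
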